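(* Let $G=(V,E)$ be a distance graph in $\mathbb{R}^d$ with $|V|=n$. Suppose there are $k\in\mathbb{N}$ and $\nu_0\in(0,1)$ such that every induced subgraph $G'=(V',E')$ of $G$ with $|V'|\ge[\nu_0 n]$ satisfies $\chi(G')>k$. Then for every family of Lebesgue measurable sets $S_1,\dots,S_k\subseteq\mathbb{R}^d$ such that $S=S_1\cup\dots\cup S_k$ has upper density $\nu\ge\nu_0$, and for every $a>0$, there exist an index $i\in\{1,\dots,k\}$ and points $\mathbf{x},\mathbf{y}\in S_i$ with $|\mathbf{x}-\mathbf{y}|=a$.
   Context: A distance graph in $\mathbb{R}^d$ is a finite graph $G=(V,E)$ with $V\subset\mathbb{R}^d$, $|V|<\infty$, and $E\subseteq\{\{\mathbf{x},\mathbf{y}\}\subseteq V:\ |\mathbf{x}-\mathbf{y}|=1\}$, where $|\cdot|$ is the Euclidean norm. $\chi$ denotes chromatic number, $[x]$ the integer part. The upper density of a measurable set $S\subseteq\mathbb{R}^d$ is $\limsup_{R\to\infty}\frac{\lambda(S\cap B_R)}{\lambda(B_R)}$, where $\lambda$ is Lebesgue measure and $B_R$ is the ball of radius $R$ centered at the origin. *)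

theory Defs
  imports "HOL-Analysis.Analysis" "HOL-Library.Liminf_Limsup"
begin

definition distance_graph :: "'a::euclidean_space set \<Rightarrow> 'a set set \<Rightarrow> bool" where
  "distance_graph V E \<longleftrightarrow> finite V \<and>
     E \<subseteq> {{x, y} | x y. x \<in> V \<and> y \<in> V \<and> dist x y = 1}"

definition proper_coloring :: "'a set \<Rightarrow> 'a set set \<Rightarrow> ('a \<Rightarrow> nat) \<Rightarrow> nat \<Rightarrow> bool" where
  "proper_coloring V E c k \<longleftrightarrow> c ` V \<subseteq> {..<k} \<and>
     (\<forall>x y. {x, y} \<in> E \<and> x \<noteq> y \<longrightarrow> c x \<noteq> c y)"

definition chromatic_number :: "'a set \<Rightarrow> 'a set set \<Rightarrow> nat" where
  "chromatic_number V E = (LEAST k. \<exists>c. proper_coloring V E c k)"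

definition induced_edges :: "'a set set \<Rightarrow> 'a set \<Rightarrow> 'a set set" where
  "induced_edges E V' = {e \<in> E. e \<subseteq> V'}"

definition upper_density :: "'a::euclidean_space set \<Rightarrow> ereal" where
  "upper_density S = Limsup at_top (\<lambda>R::real.
      ereal (measure lebesgue (S \<inter> ball 0 R) / measure lebesgue (ball (0::'a) R)))"

end

theory Submission
  imports Defs "HOL-Real_Asymp.Real_Asymp"
begin

text \<open>
  Suppose no \<open>S\<^sub>i\<close> contains two points at distance \<open>a\<close>. Then for every translate
  \<open>t + a V\<close> of the scaled graph, colouring a vertex by the index of a set \<open>S\<^sub>i\<close>
  containing its image is proper, so by hypothesis fewer than \<open>m = [\<nu>\<^sub>0 n]\<close> vertices
  land in \<open>S = S\<^sub>1 \<union> \<dots> \<union> S\<^sub>k\<close>. Integrating this count over \<open>t\<close> in a large ball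
  \<open>B\<^sub>R\<close> gives \<open>n \<lambda>(S \<inter> B\<^sub>R) \<le> (m - 1) \<lambda>(B\<^sub>R)\<close> up to a boundary shell of bounded
  width, whose relative volume vanishes as \<open>R \<rightarrow> \<infinity>\<close>. Hence the upper density of \<open>S\<close> is
  at most \<open>(m - 1)/n < \<nu>\<^sub>0\<close>.
\<close>

lemma chromatic_number_le_if_proper_coloring:
  "proper_coloring V E c k \<Longrightarrow> chromatic_number V E \<le> k"
  unfolding chromatic_number_def by (intro Least_le) blast

lemma proper_coloring_from_avoiding_cover:
  fixes V :: "'a::euclidean_space set" and Ss :: "nat \<Rightarrow> 'a set"
  assumes "distance_graph V E" and "a > 0"
    and avoid: "\<And>i x y. i \<in> {1..k} \<Longrightarrow> x \<in> Ss i \<Longrightarrow> y \<in> Ss i \<Longrightarrow> dist x y \<noteq> a"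
    and W: "W \<subseteq> {v\<in>V. t + a *\<^sub>R v \<in> (\<Union>i\<in>{1..k}. Ss i)}"
  shows "\<exists>c. proper_coloring W (induced_edges E W) c k"
proof -
  define ix where "ix v = (LEAST i. i \<in> {1..k} \<and> t + a *\<^sub>R v \<in> Ss i)" for v
  have ix: "ix v \<in> {1..k} \<and> t + a *\<^sub>R v \<in> Ss (ix v)" if "v \<in> W" for v
  proof -
    from that W have "\<exists>i. i \<in> {1..k} \<and> t + a *\<^sub>R v \<in> Ss i" by blast
    then show ?thesis unfolding ix_def by (rule LeastI_ex)
  qed
  have "proper_coloring W (induced_edges E W) (\<lambda>v. ix v - 1) k"
    unfolding proper_coloring_def
  proof (intro conjI allI impI)
    show "(\<lambda>v. ix v - 1) ` W \<subseteq> {..<k}"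
      using ix by fastforce
    fix x y assume xy: "{x, y} \<in> induced_edges E W \<and> x \<noteq> y"
    then have "x \<in> W" "y \<in> W" "{x, y} \<in> E"
      unfolding induced_edges_def by auto
    moreover obtain x' y' where "{x, y} = {x', y'}" "dist x' y' = 1"
      using \<open>{x, y} \<in> E\<close> assms(1) unfolding distance_graph_def by blast
    then have "dist x y = 1"
      by (metis doubleton_eq_iff dist_commute)
    then have "dist (t + a *\<^sub>R x) (t + a *\<^sub>R y) = a"
      using \<open>a > 0\<close> by (simp add: dist_norm scaleR_diff_right[symmetric])
    ultimately have "ix x \<noteq> ix y"
      using ix avoid by metis
    then show "ix x - 1 \<noteq> ix y - 1"
      using ix[OF \<open>x \<in> W\<close>] ix[OF \<open>y \<in> W\<close>] by auto
  qed
  then show ?thesis by blast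
qed

lemma card_translate_in_cover_less:
  fixes V :: "'a::euclidean_space set" and Ss :: "nat \<Rightarrow> 'a set"
  assumes "distance_graph V E" and "a > 0"
    and "\<And>i x y. i \<in> {1..k} \<Longrightarrow> x \<in> Ss i \<Longrightarrow> y \<in> Ss i \<Longrightarrow> dist x y \<noteq> a"
    and large_chromatic: "\<forall>V'. V' \<subseteq> V \<and> card V' \<ge> m \<longrightarrow> chromatic_number V' (induced_edges E V') > k"
  shows "card {v\<in>V. t + a *\<^sub>R v \<in> (\<Union>i\<in>{1..k}. Ss i)} < m"
proof -
  define W where "W = {v\<in>V. t + a *\<^sub>R v \<in> (\<Union>i\<in>{1..k}. Ss i)}"
  have "\<exists>c. proper_coloring W (induced_edges E W) c k"
    unfolding W_def by (rule proper_coloring_from_avoiding_cover[OF assms(1-3) order_refl])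
  then obtain c where "proper_coloring W (induced_edges E W) c k" ..
  then have "\<not> chromatic_number W (induced_edges E W) > k"
    by (simp add: chromatic_number_le_if_proper_coloring not_less)
  moreover have "W \<subseteq> V"
    unfolding W_def by blast
  ultimately have "card W < m"
    using large_chromatic by (meson not_le)
  then show ?thesis
    unfolding W_def .
qed

lemma measure_ball_conv_unit_ball:
  fixes c :: "'a::euclidean_space"
  assumes "r \<ge> 0"
  shows "measure lebesgue (ball c r) = r ^ DIM('a) * measure lebesgue (ball (0::'a) 1)"
  using content_ball_conv_unit_ball[OF assms, of c] by (simp add: measure_def)

lemma measure_unit_ball_pos: "measure lebesgue (ball (0::'a::euclidean_space) 1) > 0"
  using content_ball_gt_0_iff[of "0::'a" 1] by (simp add: measure_def)

text \<open>The measure-theoretic double counting: integrate \<open>t \<mapsto> #{v. t \<in> T v}\<close> over \<open>A\<close>.\<close>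
lemma sum_measure_Int_le_multiplicity:
  fixes A :: "'a::euclidean_space set" and T :: "'b \<Rightarrow> 'a set"
  assumes fin: "finite V" and A: "A \<in> lmeasurable"
    and T: "\<And>v. v \<in> V \<Longrightarrow> T v \<in> sets lebesgue"
    and mult: "\<And>t. t \<in> A \<Longrightarrow> card {v\<in>V. t \<in> T v} \<le> M"
  shows "(\<Sum>v\<in>V. measure lebesgue (A \<inter> T v)) \<le> real M * measure lebesgue A"
proof -
  have int: "integrable lebesgue (indicat_real (A \<inter> T v))" if "v \<in> V" for v
    using fmeasurable_Int_fmeasurable[OF A T[OF that]] by (simp add: lmeasurable_iff_integrable)
  have pointwise: "(\<Sum>v\<in>V. indicat_real (A \<inter> T v) x) \<le> real M * indicat_real A x" for x
  proof (cases "x \<in> A")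
    case True
    have "(\<Sum>v\<in>V. indicat_real (A \<inter> T v) x) = real (card {v\<in>V. x \<in> T v})"
      using True fin by (simp add: indicator_def sum.If_cases Collect_conj_eq)
    then show ?thesis using mult[OF True] True by simp
  qed (simp add: indicator_def)
  have "(\<Sum>v\<in>V. measure lebesgue (A \<inter> T v)) = LINT x|lebesgue. (\<Sum>v\<in>V. indicat_real (A \<inter> T v) x)"
    using int by (simp add: Bochner_Integration.integral_sum)
  also have "\<dots> \<le> LINT x|lebesgue. real M * indicat_real A x"
    using int A pointwise by (intro integral_mono) (auto simp: lmeasurable_iff_integrable)
  finally show ?thesis by simp
qed

lemma measure_ball_Int_translate:
  fixes c :: "'a::euclidean_space"
  shows "measure lebesgue (ball 0 R \<inter> {t. t + c \<in> S}) = measure lebesgue (ball c R \<inter> S)"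
proof -
  have "(+) c ` (ball 0 R \<inter> {t. t + c \<in> S}) = ball c R \<inter> S"
  proof safe
    fix x assume "x \<in> ball c R" "x \<in> S"
    then show "x \<in> (+) c ` (ball 0 R \<inter> {t. t + c \<in> S})"
      by (intro image_eqI[where x="x - c"]) (auto simp: dist_norm norm_minus_commute)
  qed (auto simp: dist_norm add.commute)
  then show ?thesis using measure_translation[of c "ball 0 R \<inter> {t. t + c \<in> S}"] by simp
qed

lemma sets_lebesgue_translate_preimage:
  fixes c :: "'a::euclidean_space"
  assumes "S \<in> sets lebesgue"
  shows "{t. t + c \<in> S} \<in> sets lebesgue"
proof -
  have "{t. t + c \<in> S} = (\<lambda>x. -c + x) ` S"
    by (auto intro: image_eqI[where x="_ + c"])
  then show ?thesis using lebesgue_sets_translation[OF assms, of "-c"] by simp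
qed

text \<open>Shifting the ball by \<open>c\<close> loses at most the shell of width \<open>\<bar>c\<bar> \<le> r\<close>.\<close>
lemma measure_Int_ball_shift_ge:
  fixes c :: "'a::euclidean_space"
  assumes S: "S \<in> sets lebesgue" and "norm c \<le> r" and "0 \<le> r" and "r \<le> R"
  shows "measure lebesgue (S \<inter> ball 0 R)
           - (measure lebesgue (ball (0::'a) R) - measure lebesgue (ball (0::'a) (R - r)))
         \<le> measure lebesgue (ball c R \<inter> S)"
proof -
  have sub: "S \<inter> ball 0 R \<subseteq> (ball c R \<inter> S) \<union> (ball 0 R - ball 0 (R - r))"
  proof
    fix x assume x: "x \<in> S \<inter> ball 0 R"
    have "dist c x \<le> norm x + norm c"
      using norm_triangle_ineq4[of c x] by (simp add: dist_norm)
    then show "x \<in> (ball c R \<inter> S) \<union> (ball 0 R - ball 0 (R - r))"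
      using x assms by (cases "norm x < R - r") auto
  qed
  have fm1: "ball c R \<inter> S \<in> lmeasurable"
    using fmeasurable_Int_fmeasurable[OF lmeasurable_ball S] .
  have fm2: "ball (0::'a) R - ball 0 (R - r) \<in> lmeasurable"
    by (simp add: fmeasurable.Diff)
  have "measure lebesgue (S \<inter> ball 0 R)
          \<le> measure lebesgue ((ball c R \<inter> S) \<union> (ball 0 R - ball 0 (R - r)))"
    by (rule measure_mono_fmeasurable[OF sub]) (use S fm1 fm2 in auto)
  also have "\<dots> \<le> measure lebesgue (ball c R \<inter> S) + measure lebesgue (ball (0::'a) R - ball 0 (R - r))"
    using measure_Un_le[of "ball c R \<inter> S" lebesgue "ball 0 R - ball 0 (R - r)"] fm1 fm2 by auto
  also have "measure lebesgue (ball (0::'a) R - ball 0 (R - r))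
      = measure lebesgue (ball (0::'a) R) - measure lebesgue (ball (0::'a) (R - r))"
    by (rule measurable_measure_Diff) (use assms in auto)
  finally show ?thesis by simp
qed

lemma tendsto_shifted_ratio_power: "((\<lambda>R::real. ((R - r) / R) ^ d) \<longlongrightarrow> 1) at_top"
proof -
  have "((\<lambda>R::real. (R - r) / R) \<longlongrightarrow> 1) at_top"
    by real_asymp
  then show ?thesis
    using tendsto_power[of "\<lambda>R::real. (R - r) / R" 1 at_top d] by simp
qed

context
  fixes V :: "'b set" and p :: "'b \<Rightarrow> 'a::euclidean_space" and S :: "'a set" and M :: nat
  assumes finV: "finite V" and V_ne: "V \<noteq> {}" and S: "S \<in> sets lebesgue"
    and translate_count: "\<And>t. card {v\<in>V. t + p v \<in> S} \<le> M"
begin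

lemma density_ratio_le_translate_count:
  defines "r \<equiv> \<Sum>v\<in>V. norm (p v)"
  assumes R: "R > r"
  shows "measure lebesgue (S \<inter> ball 0 R) / measure lebesgue (ball (0::'a) R)
         \<le> real M / real (card V) + 1 - ((R - r) / R) ^ DIM('a)"
proof -
  define \<beta> where "\<beta> \<rho> = measure lebesgue (ball (0::'a) \<rho>)" for \<rho>
  define n where "n = real (card V)"
  define X where "X = measure lebesgue (S \<inter> ball 0 R)"
  have "r \<ge> 0" unfolding r_def by (simp add: sum_nonneg)
  with R have "R > 0" by simp
  have n: "n > 0" unfolding n_def using finV V_ne by (simp add: card_gt_0_iff)
  have \<beta>: "\<beta> \<rho> = \<rho> ^ DIM('a) * \<beta> 1" if "\<rho> \<ge> 0" for \<rho>
    unfolding \<beta>_def using measure_ball_conv_unit_ball[OF that] by simp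
  have \<beta>R: "\<beta> R > 0"
    using \<beta>[of R] measure_unit_ball_pos \<open>R > 0\<close> by (simp add: \<beta>_def)
  have "X - (\<beta> R - \<beta> (R - r)) \<le> measure lebesgue (ball 0 R \<inter> {t. t + p v \<in> S})" if "v \<in> V" for v
  proof -
    have "norm (p v) \<le> r"
      unfolding r_def using finV that by (intro member_le_sum) auto
    then show ?thesis
      unfolding X_def \<beta>_def measure_ball_Int_translate
      using measure_Int_ball_shift_ge[OF S _ \<open>r \<ge> 0\<close>] R by simp
  qed
  then have "n * (X - (\<beta> R - \<beta> (R - r))) \<le> (\<Sum>v\<in>V. measure lebesgue (ball 0 R \<inter> {t. t + p v \<in> S}))"
    unfolding n_def using sum_mono[of V "\<lambda>_. X - (\<beta> R - \<beta> (R - r))"] by simp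
  also have "\<dots> \<le> real M * \<beta> R"
    unfolding \<beta>_def using finV translate_count
    by (intro sum_measure_Int_le_multiplicity sets_lebesgue_translate_preimage S) auto
  finally have "X \<le> real M / n * \<beta> R + \<beta> R - \<beta> (R - r)"
    using n by (simp add: field_simps)
  then have "X / \<beta> R \<le> (real M / n * \<beta> R + \<beta> R - \<beta> (R - r)) / \<beta> R"
    using \<beta>R by (simp add: divide_right_mono)
  also have "\<dots> = real M / n + 1 - \<beta> (R - r) / \<beta> R"
    using \<beta>R by (simp add: field_simps)
  also have "\<beta> (R - r) / \<beta> R = ((R - r) / R) ^ DIM('a)"
    using \<beta>[of R] \<beta>[of "R - r"] measure_unit_ball_pos R \<open>R > 0\<close> by (simp add: \<beta>_def power_divide)
  finally show ?thesis unfolding X_def \<beta>_def n_def .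
qed

lemma upper_density_le_translate_count:
  "upper_density S \<le> ereal (real M / real (card V))"
proof -
  define r where "r = (\<Sum>v\<in>V. norm (p v))"
  define g where "g R = real M / real (card V) + 1 - ((R - r) / R) ^ DIM('a)" for R
  have "(g \<longlongrightarrow> real M / real (card V) + 1 - 1) at_top"
    unfolding g_def by (intro tendsto_diff tendsto_const tendsto_shifted_ratio_power)
  then have lim: "Limsup at_top (\<lambda>R. ereal (g R)) = ereal (real M / real (card V))"
    by (intro lim_imp_Limsup) (auto intro: tendsto_ereal)
  have "upper_density S \<le> Limsup at_top (\<lambda>R. ereal (g R))"
    unfolding upper_density_def
  proof (rule Limsup_mono)
    show "\<forall>\<^sub>F R in at_top. ereal (measure lebesgue (S \<inter> ball 0 R) / measure lebesgue (ball (0::'a) R))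
                           \<le> ereal (g R)"
      using eventually_gt_at_top[of r]
    proof eventually_elim
      case (elim R)
      then show ?case
        using density_ratio_le_translate_count[of R] unfolding g_def r_def by simp
    qed
  qed
  with lim show ?thesis by simp
qed

end

theorem theorem8:
  fixes V :: "'a::euclidean_space set" and E :: "'a set set"
    and n k :: nat and \<nu>0 :: real and Ss :: "nat \<Rightarrow> 'a set" and a :: real
  assumes "distance_graph V E"
    and "card V = n"
    and "0 < \<nu>0" and "\<nu>0 < 1"
    and "\<forall>V'. V' \<subseteq> V \<and> card V' \<ge> nat \<lfloor>\<nu>0 * real n\<rfloor>
           \<longrightarrow> chromatic_number V' (induced_edges E V') > k"
    and "\<forall>i\<in>{1..k}. Ss i \<in> sets lebesgue"
    and "upper_density (\<Union>i\<in>{1..k}. Ss i) \<ge> ereal \<nu>0"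
    and "a > 0"
  shows "\<exists>i\<in>{1..k}. \<exists>x\<in>Ss i. \<exists>y\<in>Ss i. dist x y = a"
proof (rule ccontr)
  assume "\<not> ?thesis"
  then have avoid: "\<And>i x y. i \<in> {1..k} \<Longrightarrow> x \<in> Ss i \<Longrightarrow> y \<in> Ss i \<Longrightarrow> dist x y \<noteq> a"
    by blast
  define S where "S = (\<Union>i\<in>{1..k}. Ss i)"
  define m where "m = nat \<lfloor>\<nu>0 * real n\<rfloor>"
  have few: "card {v\<in>V. t + a *\<^sub>R v \<in> S} < m" for t
    unfolding S_def using card_translate_in_cover_less[OF assms(1,8) avoid assms(5)[folded m_def]] .
  have "m \<ge> 1" "m \<le> \<nu>0 * real n"
    using few[of 0] assms(3) by (auto simp: m_def)
  then have "n > 0"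
    by (cases n) auto
  have "finite V" "V \<noteq> {}"
    using assms(1,2) \<open>n > 0\<close> by (auto simp: distance_graph_def)
  have "S \<in> sets lebesgue"
    using assms(6) by (auto simp: S_def)
  have "ereal \<nu>0 \<le> upper_density S"
    using assms(7) by (simp add: S_def)
  also have "\<dots> \<le> ereal (real (m - 1) / real n)"
  proof -
    have "card {v\<in>V. t + a *\<^sub>R v \<in> S} \<le> m - 1" for t
      using few[of t] by linarith
    then show ?thesis
      using upper_density_le_translate_count[OF \<open>finite V\<close> \<open>V \<noteq> {}\<close> \<open>S \<in> sets lebesgue\<close>,
          where p="\<lambda>v. a *\<^sub>R v" and M="m - 1"] assms(2) by simp
  qed
  finally have "\<nu>0 * real n \<le> real m - 1"
    using \<open>n > 0\<close> \<open>m \<ge> 1\<close> by (simp add: field_simps of_nat_diff)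
  with \<open>m \<le> \<nu>0 * real n\<close> show False
    by linarith
qed

end
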